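(* $L_{\text{mpal}}$ can be verified with bounded error $\epsilon$ by an ADfA with $|\Sigma|+2$ affine states. Moreover, the protocol achieves perfect completeness.
   Context: $L_{\text{mpal}}=\{x \sigma x^R\mid x\in \Sigma^*, \sigma\in \Sigma\}$, and $\epsilon<1/2$ is rational. An affine state of an $m$-state affine register is a vector $v\in\mathbb{R}^m$ whose entries sum to $1$; affine operators are real matrices whose columns each sum to $1$; weighting observes basis state $e_j$ with probability $|v_j|/\|v\|_1$. A (one-way) ADfA is a deterministic finite automaton reading the input $¢ w\$$ (with left end-marker ¢ and right end-marker \$) left to right in real time, equipped with finitely many affine registers updated by affine operators with rational entries (unless stated otherwise) depending on the deterministic state and scanned symbol; after reading \$, if the deterministic state is accepting, each register is weighted once and the input is accepted iff every observed outcome lies in that register's accepting set. The ADfA acts as verifier in an Arthur–Merlin interactive proof system: it exchanges symbols with an all-powerful prover through a communication cell and reveals all its deterministic states, head moves and weighting outcomes to the prover (public coins). $V$ verifies $L$ with error $\epsilon$ if there is a prover such that every $w\in L$ is accepted with probability at least $1-\epsilon$, and for every $w\notin L$ and every prover, $w$ is rejected with probability at least $1-\epsilon$. Perfect completeness means every $w\in L$ is accepted with probability $1$. *)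

theory Defs
  imports Complex_Main
begin

datatype 'a tape = LEnd | Sym 'a | REnd

definition tape_of :: "'a list \<Rightarrow> 'a tape list" where
  "tape_of w = LEnd # map Sym w @ [REnd]"

definition L_mpal :: "'a list set" where
  "L_mpal = {x @ [s] @ rev x | x s. True}"

text \<open>There are nregs affine
 registers; register i has dim i affine states (indices 0..dim i - 1).
 op i q s g is the affine operator (matrix, row/column indices) applied to register i
 when in deterministic state q, scanning s, with prover's symbol g in the
 communication cell. racc i is the accepting set of register i.\<close>
record 'a adfa =
  states :: "nat set"
  start :: nat
  accepting :: "nat set"
  comm :: "nat set"
  delta :: "nat \<Rightarrow> 'a tape \<Rightarrow> nat \<Rightarrow> nat"
  nregs :: nat
  dim :: "nat \<Rightarrow> nat"
  op :: "nat \<Rightarrow> nat \<Rightarrow> 'a tape \<Rightarrow> nat \<Rightarrow> nat \<Rightarrow> nat \<Rightarrow> real"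
  racc :: "nat \<Rightarrow> nat set"

definition affine_operator :: "nat \<Rightarrow> (nat \<Rightarrow> nat \<Rightarrow> real) \<Rightarrow> bool" where
  "affine_operator m A \<longleftrightarrow>
     (\<forall>a<m. \<forall>b<m. A a b \<in> \<rat>) \<and> (\<forall>b<m. (\<Sum>a<m. A a b) = 1)"

definition wf_adfa :: "'a adfa \<Rightarrow> bool" where
  "wf_adfa V \<longleftrightarrow>
     finite (states V) \<and> start V \<in> states V \<and> accepting V \<subseteq> states V \<and>
     finite (comm V) \<and> comm V \<noteq> {} \<and>
     (\<forall>q\<in>states V. \<forall>s. \<forall>g\<in>comm V. delta V q s g \<in> states V) \<and>
     (\<forall>i<nregs V. dim V i \<ge> 1 \<and> racc V i \<subseteq> {..<dim V i} \<and>
        (\<forall>q\<in>states V. \<forall>s. \<forall>g\<in>comm V. affine_operator (dim V i) (op V i q s g)))"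

definition num_affine_states :: "'a adfa \<Rightarrow> nat" where
  "num_affine_states V = (\<Sum>i<nregs V. dim V i)"

definition apply_op :: "nat \<Rightarrow> (nat \<Rightarrow> nat \<Rightarrow> real) \<Rightarrow> (nat \<Rightarrow> real) \<Rightarrow> (nat \<Rightarrow> real)" where
  "apply_op m A v = (\<lambda>a. \<Sum>b<m. A a b * v b)"

fun run :: "'a adfa \<Rightarrow> nat \<times> (nat \<Rightarrow> nat \<Rightarrow> real) \<Rightarrow> ('a tape \<times> nat) list
              \<Rightarrow> nat \<times> (nat \<Rightarrow> nat \<Rightarrow> real)" where
  "run V c [] = c"
| "run V (q, R) ((s, g) # xs) =
     run V (delta V q s g, (\<lambda>i. apply_op (dim V i) (op V i q s g) (R i))) xs"

definition init_config :: "'a adfa \<Rightarrow> nat \<times> (nat \<Rightarrow> nat \<Rightarrow> real)" where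
  "init_config V = (start V, (\<lambda>i j. if j = 0 then 1 else 0))"

text \<open>A prover sees the input and the history of the (deterministic) interaction,
 which is determined by the input and its own previous answers.\<close>
type_synonym 'a prover = "'a list \<Rightarrow> nat list \<Rightarrow> nat"

definition valid_prover :: "'a adfa \<Rightarrow> 'a prover \<Rightarrow> bool" where
  "valid_prover V P \<longleftrightarrow> (\<forall>w hs. P w hs \<in> comm V)"

fun responses :: "'a prover \<Rightarrow> 'a list \<Rightarrow> nat \<Rightarrow> nat list" where
  "responses P w 0 = []"
| "responses P w (Suc n) = (let hs = responses P w n in hs @ [P w hs])"

definition final_config :: "'a adfa \<Rightarrow> 'a prover \<Rightarrow> 'a list \<Rightarrow> nat \<times> (nat \<Rightarrow> nat \<Rightarrow> real)" where
  "final_config V P w =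
     run V (init_config V) (zip (tape_of w) (responses P w (length w + 2)))"

definition weight_acc :: "nat \<Rightarrow> nat set \<Rightarrow> (nat \<Rightarrow> real) \<Rightarrow> real" where
  "weight_acc m A v = (\<Sum>j\<in>A. \<bar>v j\<bar>) / (\<Sum>j<m. \<bar>v j\<bar>)"

definition accept_prob :: "'a adfa \<Rightarrow> 'a prover \<Rightarrow> 'a list \<Rightarrow> real" where
  "accept_prob V P w =
     (let (q, R) = final_config V P w in
      if q \<in> accepting V then (\<Prod>i<nregs V. weight_acc (dim V i) (racc V i) (R i)) else 0)"

definition verifies_with_error :: "'a adfa \<Rightarrow> 'a list set \<Rightarrow> real \<Rightarrow> bool" where
  "verifies_with_error V L \<epsilon> \<longleftrightarrow>
     (\<exists>P. valid_prover V P \<and> (\<forall>w\<in>L. accept_prob V P w \<ge> 1 - \<epsilon>)) \<and>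
     (\<forall>w. w \<notin> L \<longrightarrow> (\<forall>P. valid_prover V P \<longrightarrow> 1 - accept_prob V P w \<ge> 1 - \<epsilon>))"

definition perfect_completeness :: "'a adfa \<Rightarrow> 'a list set \<Rightarrow> bool" where
  "perfect_completeness V L \<longleftrightarrow>
     (\<exists>P. valid_prover V P \<and> (\<forall>w\<in>L. accept_prob V P w = 1))"

end

theory Submission
  imports Defs
begin

text \<open>Letters are coded as nonzero digits c a of base b = |\<Sigma>| + 1. Reading w = u s v, the
  verifier keeps the base-b value of rev u in its register until the prover announces the
  centre s, and then subtracts the base-b value of v, so that after the right end-marker
  the register holds (1, K D, - K D) with D = val (rev u) - val v. By uniqueness of base-b
  representations with nonzero digits, D = 0 iff v = rev u. Weighting accepts with
  probability 1 / (1 + 2 K |D|): probability 1 for a marked palindrome and the honest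
  centre, at most 1 / (1 + 2 K) \<le> \<epsilon> for K = 1 / \<epsilon> on any other input, whatever centre is
  announced (announcing none leads to rejection). Only three of the |\<Sigma>| + 2 affine states
  are ever used.\<close>

fun radix_value :: "int \<Rightarrow> int list \<Rightarrow> int" where
  "radix_value b [] = 0"
| "radix_value b (d # ds) = d + b * radix_value b ds"

lemma radix_value_snoc: "radix_value b (ds @ [d]) = radix_value b ds + b ^ length ds * d"
  by (induction ds) (auto simp: algebra_simps)

lemma radix_value_pos:
  assumes "set ds \<subseteq> {1..<b}" "ds \<noteq> []"
  shows "radix_value b ds > 0"
  using assms
proof (induction ds)
  case (Cons d ds)
  then show ?case
    by (cases "ds = []") (auto intro!: add_pos_nonneg mult_nonneg_nonneg less_imp_le)
qed simp

text \<open>Digits are nonzero, so that lists of different lengths get different values.\<close>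
lemma radix_value_inj:
  assumes "set ds \<subseteq> {1..<b}" "set es \<subseteq> {1..<b}" "radix_value b ds = radix_value b es"
  shows "ds = es"
  using assms
proof (induction ds arbitrary: es)
  case Nil
  then show ?case using radix_value_pos[of es b] by fastforce
next
  case (Cons d ds)
  then obtain e es' where es: "es = e # es'"
    using radix_value_pos[of "d # ds" b] by (cases es) auto
  have d: "0 \<le> d" "d < b" and e: "0 \<le> e" "e < b" and "b > 0"
    using Cons.prems es by auto
  have "d = (d + b * radix_value b ds) mod b" using d by simp
  also have "\<dots> = (e + b * radix_value b es') mod b" using Cons.prems(3) es by simp
  also have "\<dots> = e" using e by simp
  finally have "d = e" .
  then have "radix_value b ds = radix_value b es'"
    using Cons.prems(3) es \<open>b > 0\<close> by simp
  moreover have "set ds \<subseteq> {1..<b}" "set es' \<subseteq> {1..<b}"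
    using Cons.prems(1,2) es by auto
  ultimately have "ds = es'" using Cons.IH by blast
  then show ?case using \<open>d = e\<close> es by simp
qed

definition aff_vec :: "real \<Rightarrow> real \<Rightarrow> nat \<Rightarrow> real" where
  "aff_vec A P = (\<lambda>j. if j = 0 then 1 - A - P else if j = 1 then A else if j = 2 then P else 0)"

text \<open>The first three columns are the images of the basis states aff_vec 0 0, aff_vec 1 0
  and aff_vec 0 1 under the affine map of apply_op_aff_matrix.\<close>
definition aff_matrix ::
    "real \<Rightarrow> real \<Rightarrow> real \<Rightarrow> real \<Rightarrow> real \<Rightarrow> real \<Rightarrow> nat \<Rightarrow> nat \<Rightarrow> real" where
  "aff_matrix a0 a1 a2 p0 p1 p2 i c =
    (if c = 0 then aff_vec a0 p0 i
     else if c = 1 then aff_vec (a0 + a1) (p0 + p1) i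
     else if c = 2 then aff_vec (a0 + a2) (p0 + p2) i
     else if i = c then 1 else 0)"

lemma sum_lessThan_eq_first_three:
  fixes f :: "nat \<Rightarrow> real"
  assumes "3 \<le> m" "\<And>j. 3 \<le> j \<Longrightarrow> f j = 0"
  shows "(\<Sum>j<m. f j) = f 0 + f 1 + f 2"
proof -
  have "(\<Sum>j<m. f j) = (\<Sum>j<3. f j)"
    using assms by (intro sum.mono_neutral_right) auto
  then show ?thesis by (simp add: numeral_3_eq_3 numeral_2_eq_2)
qed

lemma apply_op_aff_matrix:
  assumes "3 \<le> m"
  shows "apply_op m (aff_matrix a0 a1 a2 p0 p1 p2) (aff_vec A P) =
         aff_vec (a0 + a1 * A + a2 * P) (p0 + p1 * A + p2 * P)"
proof
  fix i
  have expand: "apply_op m (aff_matrix a0 a1 a2 p0 p1 p2) (aff_vec A P) i =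
        aff_matrix a0 a1 a2 p0 p1 p2 i 0 * (1 - A - P) + aff_matrix a0 a1 a2 p0 p1 p2 i 1 * A
        + aff_matrix a0 a1 a2 p0 p1 p2 i 2 * P"
    unfolding apply_op_def
    by (subst sum_lessThan_eq_first_three[OF assms]) (auto simp: aff_vec_def)
  show "apply_op m (aff_matrix a0 a1 a2 p0 p1 p2) (aff_vec A P) i =
        aff_vec (a0 + a1 * A + a2 * P) (p0 + p1 * A + p2 * P) i"
    unfolding expand by (simp add: aff_matrix_def aff_vec_def algebra_simps)
qed

lemma affine_operator_aff_matrix:
  assumes "3 \<le> m" "a0 \<in> \<rat>" "a1 \<in> \<rat>" "a2 \<in> \<rat>" "p0 \<in> \<rat>" "p1 \<in> \<rat>" "p2 \<in> \<rat>"
  shows "affine_operator m (aff_matrix a0 a1 a2 p0 p1 p2)"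
  unfolding affine_operator_def
proof (intro conjI allI impI)
  fix i c
  show "aff_matrix a0 a1 a2 p0 p1 p2 i c \<in> \<rat>"
    using assms by (auto simp: aff_matrix_def aff_vec_def)
next
  fix c assume "c < m"
  show "(\<Sum>i<m. aff_matrix a0 a1 a2 p0 p1 p2 i c) = 1"
  proof (cases "c < 3")
    case True
    have "(\<Sum>i<m. aff_matrix a0 a1 a2 p0 p1 p2 i c) = aff_matrix a0 a1 a2 p0 p1 p2 0 c
        + aff_matrix a0 a1 a2 p0 p1 p2 1 c + aff_matrix a0 a1 a2 p0 p1 p2 2 c"
      using True by (intro sum_lessThan_eq_first_three[OF assms(1)]) (auto simp: aff_matrix_def aff_vec_def)
    then show ?thesis using True by (auto simp: aff_matrix_def aff_vec_def)
  next
    case False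
    have "(\<Sum>i<m. aff_matrix a0 a1 a2 p0 p1 p2 i c) = (\<Sum>i\<in>{c}. aff_matrix a0 a1 a2 p0 p1 p2 i c)"
      using \<open>c < m\<close> False by (intro sum.mono_neutral_right) (auto simp: aff_matrix_def)
    then show ?thesis using False by (simp add: aff_matrix_def)
  qed
qed

lemma weight_acc_aff_vec:
  assumes "3 \<le> m"
  shows "weight_acc m {0} (aff_vec X (- X)) = 1 / (1 + 2 * \<bar>X\<bar>)"
proof -
  have "(\<Sum>j<m. \<bar>aff_vec X (- X) j\<bar>) = 1 + 2 * \<bar>X\<bar>"
    by (subst sum_lessThan_eq_first_three[OF assms]) (auto simp: aff_vec_def)
  then show ?thesis by (simp add: weight_acc_def aff_vec_def)
qed

lemma length_responses: "length (responses P w n) = n"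
  by (induction n) (auto simp: Let_def)

lemma responses_split:
  obtains g0 gs gl where "responses P w (length w + 2) = g0 # gs @ [gl]" "length gs = length w"
proof -
  obtain g0 rs where "responses P w (length w + 2) = g0 # rs" "length rs = length w + 1"
    using length_responses[of P w "length w + 2"] by (cases "responses P w (length w + 2)") auto
  moreover obtain gs gl where "rs = gs @ [gl]"
    using calculation(2) by (cases rs rule: rev_cases) auto
  ultimately show thesis using that by simp
qed

text \<open>Deterministic states: 0 before the left end-marker, 1 before the centre announced by
  the prover (any nonzero symbol), 2 after it, 3 rejecting sink, 4 accepting.\<close>
definition mpal_delta :: "nat \<Rightarrow> 'a tape \<Rightarrow> nat \<Rightarrow> nat" where
  "mpal_delta q s g = (case s of
      LEnd \<Rightarrow> (if q = 0 then 1 else 3)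
    | Sym _ \<Rightarrow> (if q = 1 then (if g = 0 then 1 else 2) else if q = 2 then 2 else 3)
    | REnd \<Rightarrow> (if q = 2 then 4 else 3))"

definition mpal_op :: "('a \<Rightarrow> int) \<Rightarrow> int \<Rightarrow> real \<Rightarrow> nat \<Rightarrow> 'a tape \<Rightarrow> nat \<Rightarrow> nat \<Rightarrow> nat \<Rightarrow> real"
  where
  "mpal_op c b K q s g = (case s of
      Sym a \<Rightarrow>
        (if q = 1 then
           (if g = 0 then aff_matrix (c a) b 0 0 0 1 else aff_matrix 0 1 0 1 0 0)
         else if q = 2 then aff_matrix 0 1 (- c a) 0 0 b
         else aff_matrix 0 1 0 0 0 1)
    | REnd \<Rightarrow> (if q = 2 then aff_matrix 0 K 0 0 (- K) 0 else aff_matrix 0 1 0 0 0 1)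
    | LEnd \<Rightarrow> aff_matrix 0 1 0 0 0 1)"

definition mpal_verifier :: "('a \<Rightarrow> int) \<Rightarrow> int \<Rightarrow> real \<Rightarrow> nat \<Rightarrow> 'a adfa" where
  "mpal_verifier c b K m =
    \<lparr>states = {0..4}, start = 0, accepting = {4}, comm = {0, 1}, delta = mpal_delta,
     nregs = 1, dim = (\<lambda>_. m), op = (\<lambda>_. mpal_op c b K), racc = (\<lambda>_. {0})\<rparr>"

lemma mpal_verifier_simps [simp]:
  "states (mpal_verifier c b K m) = {0..4}"
  "start (mpal_verifier c b K m) = 0"
  "accepting (mpal_verifier c b K m) = {4}"
  "comm (mpal_verifier c b K m) = {0, 1}"
  "delta (mpal_verifier c b K m) = mpal_delta"
  "nregs (mpal_verifier c b K m) = 1"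
  "adfa.dim (mpal_verifier c b K m) = (\<lambda>_. m)"
  "op (mpal_verifier c b K m) = (\<lambda>_. mpal_op c b K)"
  "racc (mpal_verifier c b K m) = (\<lambda>_. {0})"
  by (simp_all add: mpal_verifier_def)

lemma num_affine_states_mpal_verifier: "num_affine_states (mpal_verifier c b K m) = m"
  by (simp add: num_affine_states_def)

text \<open>Response k is read together with symbol k of the tape, which starts with the left
  end-marker; so the centre of w is announced with response length w div 2 + 1.\<close>
definition honest_prover :: "'a prover" where
  "honest_prover w hs = (if length hs = length w div 2 + 1 then 1 else 0)"

lemma responses_honest_prover:
  "responses honest_prover w n = map (\<lambda>i. if i = length w div 2 + 1 then 1 else 0) [0..<n]"
  by (induction n) (auto simp: honest_prover_def Let_def length_responses)

lemma map_indicator_upt: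
  assumes "k < n"
  shows "map (\<lambda>i. if i = k then 1 else 0) [0..<n] = replicate k 0 @ (1::'b::zero_neq_one) # replicate (n - Suc k) 0"
  using assms by (intro nth_equalityI) (auto simp: nth_append nth_Cons')

lemma ex_digit_coding:
  obtains c :: "'a::finite \<Rightarrow> int" where "inj c" "range c \<subseteq> {1..<int (card (UNIV :: 'a set)) + 1}"
proof -
  obtain h :: "'a \<Rightarrow> nat" where h: "bij_betw h UNIV {0..<card (UNIV :: 'a set)}"
    using ex_bij_betw_finite_nat[of "UNIV :: 'a set"] by auto
  have "inj (\<lambda>a. int (h a) + 1)"
    using bij_betw_imp_inj_on[OF h] by (auto simp: inj_on_def)
  moreover have "range (\<lambda>a. int (h a) + 1) \<subseteq> {1..<int (card (UNIV :: 'a set)) + 1}"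
    using bij_betwE[OF h] by (simp add: image_subset_iff) (meson of_nat_less_iff zless_imp_add1_zle)
  ultimately show thesis by (rule that)
qed

context
  fixes c :: "'a \<Rightarrow> int" and b :: int and K :: real and m :: nat
  assumes three_le_m: "3 \<le> m"
begin

abbreviation verifier :: "'a adfa" where
  "verifier \<equiv> mpal_verifier c b K m"

lemma wf_mpal_verifier:
  assumes "K \<in> \<rat>"
  shows "wf_adfa verifier"
  unfolding wf_adfa_def
  using three_le_m assms
  by (auto simp: mpal_delta_def mpal_op_def split: tape.split intro!: affine_operator_aff_matrix)

lemma run_after_center:
  assumes "R 0 = aff_vec A P" "length gs = length v"
  shows "fst (run verifier (2, R) (zip (map Sym v) gs @ [(REnd, g)])) = 4 \<and>
         snd (run verifier (2, R) (zip (map Sym v) gs @ [(REnd, g)])) 0 =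
           aff_vec (K * (A - P * radix_value b (map c v))) (- (K * (A - P * radix_value b (map c v))))"
  using assms
proof (induction v arbitrary: A P R gs)
  case Nil
  then show ?case by (simp add: mpal_delta_def mpal_op_def apply_op_aff_matrix[OF three_le_m])
next
  case (Cons a v)
  then obtain g' gs' where gs: "gs = g' # gs'" "length gs' = length v"
    by (cases gs) auto
  let ?R = "\<lambda>i. apply_op m (mpal_op c b K 2 (Sym a) g') (R i)"
  have "?R 0 = aff_vec (A - c a * P) (b * P)"
    using Cons.prems by (simp add: mpal_op_def apply_op_aff_matrix[OF three_le_m])
  from Cons.IH[where R = ?R, OF this gs(2)] show ?case
    using gs by (simp add: mpal_delta_def algebra_simps)
qed

lemma run_before_center:
  assumes "R 0 = aff_vec A P"
  shows "\<exists>R'. run verifier (1, R) (zip (map Sym u) (replicate (length u) 0) @ xs) =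
               run verifier (1, R') xs \<and>
             R' 0 = aff_vec (of_int b ^ length u * A + radix_value b (rev (map c u))) P"
  using assms
proof (induction u arbitrary: A R)
  case (Cons a u)
  let ?R = "\<lambda>i. apply_op m (mpal_op c b K 1 (Sym a) 0) (R i)"
  have "?R 0 = aff_vec (c a + b * A) P"
    using Cons.prems by (simp add: mpal_op_def apply_op_aff_matrix[OF three_le_m])
  from Cons.IH[where R = ?R, OF this] show ?case
    by (simp add: mpal_delta_def radix_value_snoc algebra_simps)
qed auto

lemma run_without_center:
  assumes "R 0 = aff_vec A P"
  shows "fst (run verifier (1, R) (zip (map Sym w) (replicate (length w) 0) @ [(REnd, g)])) = 3"
  using run_before_center[where R = R, OF assms, of w "[(REnd, g)]"]
  by (auto simp: mpal_delta_def)

lemma run_with_center: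
  assumes "R 0 = aff_vec 0 0" "length gs = length v" "g' \<noteq> 0"
  obtains R' where
    "run verifier (1, R) (zip (map Sym (u @ s # v)) (replicate (length u) 0 @ g' # gs) @ [(REnd, g)])
       = (4, R')"
    "R' 0 = aff_vec (K * (radix_value b (rev (map c u)) - radix_value b (map c v)))
                    (- (K * (radix_value b (rev (map c u)) - radix_value b (map c v))))"
proof -
  obtain R1 where R1:
    "run verifier (1, R) (zip (map Sym u) (replicate (length u) 0) @ (Sym s, g') # zip (map Sym v) gs @ [(REnd, g)])
       = run verifier (1, R1) ((Sym s, g') # zip (map Sym v) gs @ [(REnd, g)])"
    "R1 0 = aff_vec (radix_value b (rev (map c u))) 0"
    using run_before_center[where R = R, OF assms(1)] by fastforce
  let ?R2 = "\<lambda>i. apply_op m (mpal_op c b K 1 (Sym s) g') (R1 i)"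
  have "?R2 0 = aff_vec (radix_value b (rev (map c u))) 1"
    using R1(2) assms(3) by (simp add: mpal_op_def apply_op_aff_matrix[OF three_le_m])
  from run_after_center[where R = ?R2, OF this assms(2), of g] R1(1) assms(3) that
  show thesis
    by (simp add: mpal_delta_def prod_eq_iff)
qed

lemma final_config_mpal_verifier:
  assumes "responses P w (length w + 2) = g0 # gs @ [gl]"
  shows "final_config verifier P w =
         run verifier (1, \<lambda>_. aff_vec 0 0) (zip (map Sym w) gs @ [(REnd, gl)])"
proof -
  have "length gs = length w"
    using assms length_responses[of P w "length w + 2"] by simp
  then have "zip (tape_of w) (responses P w (length w + 2)) =
             (LEnd, g0) # zip (map Sym w) gs @ [(REnd, gl)]"
    using assms by (simp add: tape_of_def)
  moreover have "init_config verifier = (0, \<lambda>_. aff_vec 0 0)"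
    by (simp add: init_config_def aff_vec_def fun_eq_iff)
  ultimately show ?thesis
    by (simp add: final_config_def mpal_delta_def mpal_op_def apply_op_aff_matrix[OF three_le_m])
qed

lemma accept_prob_mpal_verifier:
  "accept_prob verifier P w =
     (case final_config verifier P w of (q, R) \<Rightarrow> if q = 4 then weight_acc m {0} (R 0) else 0)"
  by (simp add: accept_prob_def case_prod_beta)

lemma mpal_verifier_sound:
  assumes "inj c" "range c \<subseteq> {1..<b}" "0 \<le> K" "w \<notin> L_mpal"
  shows "accept_prob verifier P w \<le> 1 / (1 + 2 * K)"
proof -
  obtain g0 gs gl where rs: "responses P w (length w + 2) = g0 # gs @ [gl]"
    and len: "length gs = length w"
    by (rule responses_split)
  note final = final_config_mpal_verifier[OF rs]
  show ?thesis
  proof (cases "\<exists>g\<in>set gs. g \<noteq> 0")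
    case False
    then have "gs = replicate (length w) 0"
      using len by (simp add: list_eq_iff_nth_eq)
    then have "fst (final_config verifier P w) = 3"
      using final run_without_center[of "\<lambda>_. aff_vec 0 0"] by simp
    then show ?thesis
      using assms(3) by (simp add: accept_prob_mpal_verifier case_prod_beta)
  next
    case True
    then obtain ys g' zs where gs: "gs = ys @ g' # zs" "g' \<noteq> 0" "\<forall>y\<in>set ys. y = 0"
      by (elim split_list_first_propE) auto
    define u where "u = take (length ys) w"
    define s where "s = w ! length ys"
    define v where "v = drop (Suc (length ys)) w"
    have w: "w = u @ s # v"
      unfolding u_def s_def v_def using len gs(1) by (simp add: id_take_nth_drop)
    have gs_split: "ys = replicate (length u) 0" "length zs = length v"
      using gs len by (auto simp: u_def v_def replicate_length_same)
    define D where "D = radix_value b (rev (map c u)) - radix_value b (map c v)"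
    obtain R' where
      R': "final_config verifier P w = (4, R')" "R' 0 = aff_vec (K * D) (- (K * D))"
      using run_with_center[of "\<lambda>_. aff_vec 0 0" zs v g' u s gl] final gs w gs_split
      unfolding D_def by auto
    have "D \<noteq> 0"
    proof
      assume "D = 0"
      then have "map c (rev u) = map c v"
        using radix_value_inj[of "rev (map c u)" b "map c v"] assms(2)
        by (auto simp: D_def rev_map)
      then have "v = rev u" using assms(1) by (simp add: inj_map_eq_map)
      then show False using w assms(4) by (auto simp: L_mpal_def)
    qed
    then have "1 \<le> \<bar>real_of_int D\<bar>" by linarith
    then have "K \<le> \<bar>K * D\<bar>"
      using assms(3) by (simp add: abs_mult mult_le_cancel_left1)
    then show ?thesis
      using R' assms(3) weight_acc_aff_vec[OF three_le_m]
      by (simp add: accept_prob_mpal_verifier frac_le)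
  qed
qed

lemma mpal_verifier_complete:
  assumes "w \<in> L_mpal"
  shows "accept_prob verifier honest_prover w = 1"
proof -
  obtain x s where w: "w = x @ s # rev x"
    using assms by (auto simp: L_mpal_def)
  let ?zeros = "replicate (length x) (0::nat)"
  have "responses honest_prover w (length w + 2) = replicate (Suc (length x)) 0 @ 1 # replicate (Suc (length x)) 0"
  proof -
    have "length w div 2 + 1 = Suc (length x)" using w by simp
    then show ?thesis
      unfolding responses_honest_prover by (subst map_indicator_upt) (simp_all add: w)
  qed
  then have "responses honest_prover w (length w + 2) = 0 # (?zeros @ 1 # ?zeros) @ [0]"
    by (simp add: replicate_append_same)
  from final_config_mpal_verifier[OF this] obtain R' where
    "final_config verifier honest_prover w = (4, R')"
    "R' 0 = aff_vec (K * (radix_value b (rev (map c x)) - radix_value b (map c (rev x))))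
                    (- (K * (radix_value b (rev (map c x)) - radix_value b (map c (rev x)))))"
    using run_with_center[of "\<lambda>_. aff_vec 0 0" ?zeros "rev x" 1 x s 0] w by auto
  then show ?thesis
    using weight_acc_aff_vec[OF three_le_m, of 0] by (simp add: accept_prob_mpal_verifier rev_map)
qed

lemma mpal_verifier_verifies:
  assumes "inj c" "range c \<subseteq> {1..<b}" "0 \<le> K" "1 / (1 + 2 * K) \<le> \<epsilon>"
  shows "verifies_with_error verifier L_mpal \<epsilon>" and "perfect_completeness verifier L_mpal"
proof -
  have honest: "valid_prover verifier honest_prover"
    by (simp add: valid_prover_def honest_prover_def)
  have "0 < 1 / (1 + 2 * K)"
    using assms(3) by simp
  then have "1 - \<epsilon> \<le> accept_prob verifier honest_prover w" if "w \<in> L_mpal" for w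
    using mpal_verifier_complete[OF that] assms(4) by linarith
  moreover have "accept_prob verifier P w \<le> \<epsilon>" if "w \<notin> L_mpal" for P w
    using mpal_verifier_sound[OF assms(1-3) that, where P = P] assms(4) by linarith
  ultimately show "verifies_with_error verifier L_mpal \<epsilon>"
    unfolding verifies_with_error_def using honest by auto
  show "perfect_completeness verifier L_mpal"
    unfolding perfect_completeness_def using honest mpal_verifier_complete by blast
qed

end

theorem theorem3:
  fixes \<epsilon> :: real
  assumes "\<epsilon> \<in> \<rat>" and "0 < \<epsilon>" and "\<epsilon> < 1/2"
  shows "\<exists>V :: ('a::finite) adfa.
           wf_adfa V \<and> num_affine_states V = card (UNIV :: 'a set) + 2 \<and>
           verifies_with_error V (L_mpal :: 'a list set) \<epsilon> \<and>
           perfect_completeness V (L_mpal :: 'a list set)"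
proof -
  define n where "n = card (UNIV :: 'a set)"
  obtain c :: "'a \<Rightarrow> int" where c: "inj c" "range c \<subseteq> {1..<int n + 1}"
    unfolding n_def by (rule ex_digit_coding)
  define V where "V = mpal_verifier c (int n + 1) (1 / \<epsilon>) (n + 2)"
  have m: "3 \<le> n + 2"
    using card_gt_0_iff[of "UNIV :: 'a set"] unfolding n_def by simp
  have "1 / (1 + 2 * (1 / \<epsilon>)) \<le> \<epsilon>"
    using assms(2) by (simp add: field_simps)
  then have "verifies_with_error V L_mpal \<epsilon> \<and> perfect_completeness V L_mpal"
    unfolding V_def using mpal_verifier_verifies[OF m c] assms(2) by simp
  moreover have "wf_adfa V"
    unfolding V_def using assms(1) by (intro wf_mpal_verifier[OF m]) simp
  ultimately show ?thesis
    by (intro exI[of _ V]) (simp add: V_def n_def num_affine_states_mpal_verifier)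
qed

end
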